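(* Let $m,n\ge 2$ and let $\mathcal{C}$ be a Cauchy tensor of order $m$ and dimension $n$ with generating vector $c\in\mathbb{R}^n$ all of whose entries are nonnegative. Then every H-eigenvalue of $\mathcal{C}$ is nonnegative.
   Context: The Cauchy tensor with generating vector $c=(c_1,\dots,c_n)^T$ (with $c_{i_1}+\cdots+c_{i_m}\neq0$ for all indices) is $\mathcal{C}=(c_{i_1\cdots i_m})$, $c_{i_1\cdots i_m}=\frac{1}{c_{i_1}+\cdots+c_{i_m}}$, $i_j\in\{1,\dots,n\}$; it is symmetric. For $x\in\mathbb{R}^n$, $\mathcal{C}x^{m-1}\in\mathbb{R}^n$ has $i$-th component $\sum_{i_2,\dots,i_m}c_{ii_2\cdots i_m}x_{i_2}\cdots x_{i_m}$. A real number $\lambda$ is an H-eigenvalue of $\mathcal{C}$ if there is $x\in\mathbb{R}^n\setminus\{0\}$ with $\mathcal{C}x^{m-1}=\lambda x^{[m-1]}$, where $x^{[m-1]}=(x_1^{m-1},\dots,x_n^{m-1})^T$. *)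

theory Defs
  imports "HOL-Analysis.Analysis"
begin

text \<open>An order-m tensor of dimension CARD('n) is a function from index lists
  (i_1,...,i_m) (lists of length m over 'n) to reals.\<close>

definition cauchy_tensor :: "real ^ 'n \<Rightarrow> 'n list \<Rightarrow> real" where
  "cauchy_tensor c is = 1 / (\<Sum>j\<leftarrow>is. c $ j)"

definition cauchy_gen_ok :: "nat \<Rightarrow> real ^ 'n \<Rightarrow> bool" where
  "cauchy_gen_ok m c \<longleftrightarrow> (\<forall>is::'n list. length is = m \<longrightarrow> (\<Sum>j\<leftarrow>is. c $ j) \<noteq> 0)"

definition tensor_apply :: "nat \<Rightarrow> ('n::finite list \<Rightarrow> real) \<Rightarrow> real ^ 'n \<Rightarrow> real ^ 'n" where
  "tensor_apply m T x = (\<chi> i. \<Sum>js\<in>{js::'n list. length js = m - 1}.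
       T (i # js) * (\<Prod>j\<leftarrow>js. x $ j))"

definition H_eigenvalue :: "nat \<Rightarrow> ('n::finite list \<Rightarrow> real) \<Rightarrow> real \<Rightarrow> bool" where
  "H_eigenvalue m T lam \<longleftrightarrow> (\<exists>x::real^'n. x \<noteq> 0 \<and>
       tensor_apply m T x = (\<chi> i. lam * (x $ i) ^ (m - 1)))"

end

theory Submission
  imports Defs
begin

text \<open>Since \<open>1/e = \<integral>\<^sub>0\<^sup>1 t powr (e - 1) dt\<close> for \<open>e > 0\<close>, every row form of the Cauchy tensor is
  an integral of a power: \<open>\<Sum>\<^bsub>js\<^esub> (\<Prod>\<^bsub>j\<in>js\<^esub> x j) / (a + \<Sum>\<^bsub>j\<in>js\<^esub> c j) = \<integral>\<^sub>0\<^sup>1 t powr (a - 1) * (\<Sum>\<^sub>j x j * t powr c j)^k dt\<close>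
  (sum over words \<open>js\<close> of length \<open>k\<close>), which is nonnegative for even \<open>k\<close>. For odd \<open>m\<close> apply this
  to row \<open>i\<close> of the eigen-equation, where \<open>x i \<noteq> 0\<close>: it equals \<open>\<lambda> * (x i)^(m-1)\<close>, an even power.
  For even \<open>m\<close> apply it with \<open>a = 0\<close>, \<open>k = m\<close> to the full form \<open>\<C> x^m = \<lambda> * \<Sum>\<^sub>i (x i)^m\<close>.\<close>

lemma sum_lists_length_Suc:
  fixes g :: "'n::finite list \<Rightarrow> 'b::comm_monoid_add"
  shows "(\<Sum>js\<in>{js. length js = Suc k}. g js) = (\<Sum>j\<in>UNIV. \<Sum>js\<in>{js. length js = k}. g (j # js))"
proof -
  have eq: "{js::'n list. length js = Suc k} = (\<lambda>p. fst p # snd p) ` (UNIV \<times> {js. length js = k})"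
    by (auto simp: length_Suc_conv image_iff)
  have inj: "inj_on (\<lambda>p::'n \<times> 'n list. fst p # snd p) (UNIV \<times> {js. length js = k})"
    by (auto simp: inj_on_def prod_eq_iff)
  show ?thesis unfolding eq sum.reindex[OF inj]
    using sum.cartesian_product[of "\<lambda>j js. g (j # js)" "{js. length js = k}" UNIV]
    by (simp add: case_prod_unfold)
qed

lemma sum_lists_length_prod_list:
  fixes y :: "'n::finite \<Rightarrow> 'a::comm_semiring_1"
  shows "(\<Sum>js\<in>{js::'n list. length js = k}. \<Prod>j\<leftarrow>js. y j) = (\<Sum>j\<in>UNIV. y j) ^ k"
proof (induction k)
  case 0
  have "{js::'n list. length js = 0} = {[]}" by auto
  then show ?case by simp
next
  case (Suc k)
  show ?case unfolding sum_lists_length_Suc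
    by (simp add: sum_distrib_left[symmetric] Suc sum_distrib_right[symmetric])
qed

lemma powr_sum_list: "(t::real) > 0 \<Longrightarrow> t powr (\<Sum>j\<leftarrow>js. f j) = (\<Prod>j\<leftarrow>js. t powr f j)"
  by (induction js) (auto simp: powr_add)

lemma prod_list_mult: "(\<Prod>j\<leftarrow>js. f j) * (\<Prod>j\<leftarrow>js. g j) = (\<Prod>j\<leftarrow>js. f j * g j :: 'a::comm_monoid_mult)"
  by (induction js) (auto simp: algebra_simps)

lemma sum_lists_length_prod_powr:
  fixes x c :: "'n::finite \<Rightarrow> real"
  assumes "t > 0"
  shows "(\<Sum>js\<in>{js. length js = k}. (\<Prod>j\<leftarrow>js. x j) * t powr (a + (\<Sum>j\<leftarrow>js. c j)))
    = t powr a * (\<Sum>j\<in>UNIV. x j * t powr c j) ^ k"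
  using assms unfolding sum_lists_length_prod_list[symmetric]
  by (simp add: sum_distrib_left powr_add powr_sum_list prod_list_mult algebra_simps)

text \<open>The left-hand side is \<open>\<integral>\<^sub>0\<^sup>1 t\<^sup>-\<^sup>1 \<Sum> P t\<^sup>e dt\<close>; instead of integrating we use that
  \<open>\<Phi> t = \<Sum> P t\<^sup>e / e\<close> vanishes at \<open>0\<close> and is nondecreasing on \<open>[0,1]\<close>.\<close>

lemma sum_divide_nonneg_if_powr_sum_nonneg:
  fixes P e :: "'a \<Rightarrow> real"
  assumes "finite L" and e_pos: "\<And>l. l \<in> L \<Longrightarrow> e l > 0"
    and nonneg: "\<And>t. 0 < t \<Longrightarrow> t < 1 \<Longrightarrow> 0 \<le> (\<Sum>l\<in>L. P l * t powr e l)"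
  shows "0 \<le> (\<Sum>l\<in>L. P l / e l)"
proof -
  define \<Phi> where "\<Phi> t = (\<Sum>l\<in>L. P l * t powr e l / e l)" for t
  have "\<Phi> 0 \<le> \<Phi> 1"
  proof (rule DERIV_nonneg_imp_increasing_open[of 0 1 \<Phi>])
    have "continuous_on {0..1} (\<lambda>t. P l * t powr e l / e l)" if "l \<in> L" for l
      using e_pos[OF that]
      by (intro continuous_on_divide continuous_on_mult continuous_on_const continuous_on_powr')
        (auto intro: continuous_on_id)
    then show "continuous_on {0..1} \<Phi>"
      unfolding \<Phi>_def[abs_def] by (rule continuous_on_sum)
  next
    fix t :: real assume t: "0 < t" "t < 1"
    have "DERIV \<Phi> t :> (\<Sum>l\<in>L. P l * (e l * t powr (e l - 1)) / e l)"
      unfolding \<Phi>_def[abs_def]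
      by (intro DERIV_sum DERIV_cdivide DERIV_cmult has_real_derivative_powr t)
    moreover have "(\<Sum>l\<in>L. P l * (e l * t powr (e l - 1)) / e l) = (\<Sum>l\<in>L. P l * t powr e l) / t"
      using t by (auto simp: sum_divide_distrib powr_diff dest: e_pos intro!: sum.cong)
    ultimately show "\<exists>y. DERIV \<Phi> t :> y \<and> y \<ge> 0"
      using nonneg[OF t] t by auto
  qed simp
  moreover have "\<Phi> 0 = 0" unfolding \<Phi>_def using e_pos by (simp add: sum.neutral)
  ultimately show ?thesis unfolding \<Phi>_def by simp
qed

lemma cauchy_row_form_nonneg:
  fixes x c :: "'n::finite \<Rightarrow> real"
  assumes "even k" and "a \<ge> 0"
    and pos: "\<And>js. length js = k \<Longrightarrow> a + (\<Sum>j\<leftarrow>js. c j) > 0"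
  shows "0 \<le> (\<Sum>js\<in>{js. length js = k}. (\<Prod>j\<leftarrow>js. x j) / (a + (\<Sum>j\<leftarrow>js. c j)))"
proof (rule sum_divide_nonneg_if_powr_sum_nonneg)
  show "finite {js::'n list. length js = k}"
    using finite_lists_length_eq[of "UNIV::'n set" k] by simp
  fix t :: real assume "0 < t"
  then show "0 \<le> (\<Sum>js\<in>{js. length js = k}. (\<Prod>j\<leftarrow>js. x j) * t powr (a + (\<Sum>j\<leftarrow>js. c j)))"
    using \<open>even k\<close> by (simp add: sum_lists_length_prod_powr zero_le_even_power)
qed (use pos in auto)

lemma cauchy_form_first_index:
  fixes x c :: "'n::finite \<Rightarrow> real"
  shows "(\<Sum>js\<in>{js. length js = Suc k}. (\<Prod>j\<leftarrow>js. x j) / (\<Sum>j\<leftarrow>js. c j))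
    = (\<Sum>i\<in>UNIV. x i * (\<Sum>js\<in>{js. length js = k}. (\<Prod>j\<leftarrow>js. x j) / (c i + (\<Sum>j\<leftarrow>js. c j))))"
  by (subst sum_lists_length_Suc) (simp add: sum_distrib_left)

lemma cauchy_denominator_pos:
  assumes "cauchy_gen_ok m c" and "\<forall>i. c $ i \<ge> 0" and "length js = m"
  shows "0 < (\<Sum>j\<leftarrow>js. c $ j)"
proof -
  have "0 \<le> (\<Sum>j\<leftarrow>js. c $ j)"
    using assms(2) by (induction js) auto
  with assms(1,3) show ?thesis unfolding cauchy_gen_ok_def by fastforce
qed

lemma tensor_apply_cauchy_tensor_nth:
  "tensor_apply m (cauchy_tensor c) x $ i
    = (\<Sum>js\<in>{js. length js = m - 1}. (\<Prod>j\<leftarrow>js. x$j) / (c$i + (\<Sum>j\<leftarrow>js. c$j)))"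
  unfolding tensor_apply_def cauchy_tensor_def by simp

lemma sum_even_power_pos:
  fixes x :: "'n::finite \<Rightarrow> real"
  assumes "even k" and "x i \<noteq> 0"
  shows "0 < (\<Sum>j\<in>UNIV. x j ^ k)"
proof -
  have "0 < x i ^ k" using assms by (simp add: zero_less_power_eq)
  also have "x i ^ k \<le> (\<Sum>j\<in>UNIV. x j ^ k)"
    by (rule member_le_sum) (auto simp: assms(1) zero_le_even_power)
  finally show ?thesis .
qed

theorem theorem3p3:
  fixes c :: "real ^ 'n" and m :: nat and lam :: real
  assumes "m \<ge> 2" and "CARD('n) \<ge> 2"
    and "cauchy_gen_ok m c"
    and "\<forall>i. c $ i \<ge> 0"
    and "H_eigenvalue m (cauchy_tensor c) lam"
  shows "lam \<ge> 0"
proof -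
  from assms(5) obtain x :: "real^'n" where x0: "x \<noteq> 0"
    and ev: "tensor_apply m (cauchy_tensor c) x = (\<chi> i. lam * (x $ i) ^ (m - 1))"
    unfolding H_eigenvalue_def by blast
  have row: "(\<Sum>js\<in>{js. length js = m - 1}. (\<Prod>j\<leftarrow>js. x$j) / (c$i + (\<Sum>j\<leftarrow>js. c$j)))
      = lam * (x$i)^(m-1)" for i
    using arg_cong[OF ev, of "\<lambda>y. y $ i"] by (simp add: tensor_apply_cauchy_tensor_nth)
  have denom_pos: "length js = m \<Longrightarrow> 0 < (\<Sum>j\<leftarrow>js. c$j)" for js
    using cauchy_denominator_pos assms(3,4) by blast
  obtain i where xi: "x$i \<noteq> 0" using x0 by (auto simp: vec_eq_iff)
  show ?thesis
  proof (cases "even m")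
    case False
    then have "even (m - 1)" using assms(1) by simp
    moreover have "length js = m - 1 \<Longrightarrow> 0 < c$i + (\<Sum>j\<leftarrow>js. c$j)" for js
      using denom_pos[of "i # js"] assms(1) by simp
    ultimately have "0 \<le> lam * (x$i)^(m-1)"
      unfolding row[symmetric] using assms(4) by (intro cauchy_row_form_nonneg) auto
    moreover have "(x$i)^(m-1) > 0" using \<open>even (m - 1)\<close> xi by (simp add: zero_less_power_eq)
    ultimately show ?thesis by (simp add: zero_le_mult_iff)
  next
    case True
    have m: "m = Suc (m - 1)" using assms(1) by simp
    have "0 \<le> (\<Sum>js\<in>{js. length js = m}. (\<Prod>j\<leftarrow>js. x$j) / (0 + (\<Sum>j\<leftarrow>js. c$j)))"
      using cauchy_row_form_nonneg[of m 0 "($) c" "($) x"] True denom_pos by simp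
    also have "\<dots> = (\<Sum>i\<in>UNIV. x$i * (\<Sum>js\<in>{js. length js = m - 1}.
        (\<Prod>j\<leftarrow>js. x$j) / (c$i + (\<Sum>j\<leftarrow>js. c$j))))"
      by (subst m) (simp add: cauchy_form_first_index)
    also have "\<dots> = lam * (\<Sum>i\<in>UNIV. (x$i)^m)"
      unfolding row by (subst m) (simp add: sum_distrib_left algebra_simps)
    finally have "0 \<le> lam * (\<Sum>i\<in>UNIV. (x$i)^m)" .
    moreover have "0 < (\<Sum>i\<in>UNIV. (x$i)^m)" using sum_even_power_pos[OF True] xi .
    ultimately show ?thesis by (simp add: zero_le_mult_iff)
  qed
qed

end
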